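(* For every computable metric space $X$: $\overline{\mathsf{C}_X'}\equiv_{sW}(\overline{\mathsf{C}_X})'$.
   Context: A problem $f:\subseteq X\rightrightarrows Y$ between represented spaces (sets with surjective partial maps $\delta:\subseteq\mathbb{N}^\mathbb{N}\to X$) is a partial multi-valued map; $F\vdash f$ means $\delta_YF(p)\in f(\delta_X(p))$ whenever $\delta_X(p)\in\mathrm{dom}(f)$; $f\le_{sW}g$ iff there are computable $H,K$ with $HGK\vdash f$ for all $G\vdash g$; $\equiv_{sW}$ the induced equivalence. For a computable metric space $(X,d,\alpha)$ (Cauchy representation; basic balls $B_{\langle n,\langle i,k\rangle\rangle}=B(\alpha(n),\tfrac{i}{k+1})$), $\mathcal{A}_-(X)$ is the set of closed subsets represented by $p\mapsto X\setminus\bigcup_nB_{p(n)}$, and $\mathsf C_X:\subseteq\mathcal A_-(X)\rightrightarrows X$, $A\mapsto A$, defined on nonempty $A$. $\lim:\subseteq\mathbb{N}^\mathbb{N}\to\mathbb{N}^\mathbb{N}$ maps $\langle p_0,p_1,\dots\rangle$ to $\lim_np_n$; the jump $f'$ of $f$ is $f$ with input representation $\delta_X\circ\lim$. For $p\in\mathbb{N}^\mathbb{N}$, $p-1$ is the concatenation of $p(0)-1,p(1)-1,\dots$ with $0-1$ the empty word; the completion of $(X,\delta_X)$ is $\overline X=X\cup\{\bot\}$ with $\delta_{\overline X}(p)=\delta_X(p-1)$ if $p-1$ is an infinite sequence in $\mathrm{dom}(\delta_X)$ and $\bot$ otherwise; the completion $\overline f:\overline X\rightrightarrows\overline Y$ equals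 $f$ on $\mathrm{dom}(f)$ and $\overline Y$ elsewhere. *)

theory Defs
  imports "HOL-Analysis.Analysis" "HOL-Library.Nat_Bijection" "HOL-Library.Infinite_Set"
begin

datatype recf = Zr | Sc | Proj nat | Comp recf "recf list" | Prec recf recf | Mn recf

inductive rec_eval :: "recf \<Rightarrow> nat list \<Rightarrow> nat \<Rightarrow> bool" where
  zr: "rec_eval Zr xs 0"
| sc: "rec_eval Sc (x # xs) (Suc x)"
| proj: "n < length xs \<Longrightarrow> rec_eval (Proj n) xs (xs ! n)"
| comp: "list_all2 (\<lambda>g y. rec_eval g xs y) gs ys \<Longrightarrow> rec_eval f ys z \<Longrightarrow> rec_eval (Comp f gs) xs z"
| prec0: "rec_eval f xs y \<Longrightarrow> rec_eval (Prec f g) (0 # xs) y"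
| precS: "rec_eval (Prec f g) (n # xs) y \<Longrightarrow> rec_eval g (y # n # xs) z
           \<Longrightarrow> rec_eval (Prec f g) (Suc n # xs) z"
| mn: "rec_eval f (n # xs) 0 \<Longrightarrow> (\<forall>m<n. \<exists>y. 0 < y \<and> rec_eval f (m # xs) y)
           \<Longrightarrow> rec_eval (Mn f) xs n"

definition total_rec2 :: "(nat \<Rightarrow> nat \<Rightarrow> nat) \<Rightarrow> bool" where
  "total_rec2 h \<longleftrightarrow> (\<exists>f. \<forall>x y. rec_eval f [x, y] (h x y))"

definition total_rec3 :: "(nat \<Rightarrow> nat \<Rightarrow> nat \<Rightarrow> nat) \<Rightarrow> bool" where
  "total_rec3 h \<longleftrightarrow> (\<exists>f. \<forall>x y z. rec_eval f [x, y, z] (h x y z))"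

type_synonym baire = "nat \<Rightarrow> nat"

definition cpair :: "nat \<Rightarrow> nat \<Rightarrow> nat" where
  "cpair i j = triangle (i + j) + j"

definition prefix_code :: "baire \<Rightarrow> nat \<Rightarrow> nat" where
  "prefix_code p k = list_encode (map p [0..<k])"

text \<open>A partial map H on Baire space (None = undefined) is computable iff some
  oracle machine computes H(p) for every p in dom H.\<close>
definition computable_map :: "(baire \<Rightarrow> baire option) \<Rightarrow> bool" where
  "computable_map H \<longleftrightarrow> (\<exists>h. total_rec2 h \<and>
     (\<forall>p q. H p = Some q \<longrightarrow>
        (\<forall>n. (\<exists>k. 0 < h (prefix_code p k) n) \<and>
             h (prefix_code p (LEAST k. 0 < h (prefix_code p k) n)) n = Suc (q n))))"

type_synonym 'a rep = "baire \<Rightarrow> 'a option"   \<comment> \<open>partial surjection onto its range\<close>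

text \<open>A problem f :\<subseteq> X \<rightrightarrows> Y is a map to sets of values; dom f = {x. f x \<noteq> {}}.\<close>
type_synonym ('a, 'b) problem = "'a \<Rightarrow> 'b set"

definition realizes :: "'a rep \<Rightarrow> 'b rep \<Rightarrow> ('a, 'b) problem \<Rightarrow> (baire \<Rightarrow> baire option) \<Rightarrow> bool" where
  "realizes dX dY f F \<longleftrightarrow>
     (\<forall>p x. dX p = Some x \<and> f x \<noteq> {} \<longrightarrow>
        (\<exists>q y. F p = Some q \<and> dY q = Some y \<and> y \<in> f x))"

definition sW_le :: "'a rep \<Rightarrow> 'b rep \<Rightarrow> ('a, 'b) problem \<Rightarrow>
                     'c rep \<Rightarrow> 'd rep \<Rightarrow> ('c, 'd) problem \<Rightarrow> bool" where
  "sW_le dX dY f dZ dW g \<longleftrightarrow>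
     (\<exists>H K. computable_map H \<and> computable_map K \<and>
        (\<forall>G. realizes dZ dW g G \<longrightarrow>
              realizes dX dY f (\<lambda>p. Option.bind (K p) (\<lambda>r. Option.bind (G r) H))))"

definition sW_equiv :: "'a rep \<Rightarrow> 'b rep \<Rightarrow> ('a, 'b) problem \<Rightarrow>
                        'c rep \<Rightarrow> 'd rep \<Rightarrow> ('c, 'd) problem \<Rightarrow> bool" where
  "sW_equiv dX dY f dZ dW g \<longleftrightarrow> sW_le dX dY f dZ dW g \<and> sW_le dZ dW g dX dY f"

text \<open><p0,p1,...>(<i,j>) = p_i(j); lim maps it to the pointwise limit in Baire space.\<close>
definition baire_lim_rel :: "baire \<Rightarrow> baire \<Rightarrow> bool" where
  "baire_lim_rel p q \<longleftrightarrow> (\<forall>j. \<exists>N. \<forall>i\<ge>N. p (cpair i j) = q j)"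

definition jump_rep :: "'a rep \<Rightarrow> 'a rep" where
  "jump_rep d p = (if \<exists>q. baire_lim_rel p q then d (THE q. baire_lim_rel p q) else None)"

section \<open>Completion (bottom represented by None)\<close>

definition minus1 :: "baire \<Rightarrow> baire" where
  "minus1 p = (\<lambda>k. p (enumerate {n. p n \<noteq> 0} k) - 1)"

definition compl_rep :: "'a rep \<Rightarrow> 'a option rep" where
  "compl_rep d p = (if infinite {n. p n \<noteq> 0}
                    then (case d (minus1 p) of Some x \<Rightarrow> Some (Some x) | None \<Rightarrow> Some None)
                    else Some None)"

definition compl_prob :: "('a, 'b) problem \<Rightarrow> ('a option, 'b option) problem" where
  "compl_prob f xo = (case xo of Some x \<Rightarrow> (if f x \<noteq> {} then Some ` f x else UNIV)
                              | None \<Rightarrow> UNIV)"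

definition rat_code :: "nat \<Rightarrow> real" where
  "rat_code m = (let (a, r) = prod_decode m; (b, c) = prod_decode r
                 in (real a - real b) / (real c + 1))"

definition computable_metric :: "(nat \<Rightarrow> 'a::metric_space) \<Rightarrow> bool" where
  "computable_metric \<alpha> \<longleftrightarrow> closure (range \<alpha>) = UNIV \<and>
     (\<exists>h. total_rec3 h \<and> (\<forall>i j n. \<bar>rat_code (h i j n) - dist (\<alpha> i) (\<alpha> j)\<bar> \<le> (1/2) ^ n))"

definition cauchy_name :: "(nat \<Rightarrow> 'a::metric_space) \<Rightarrow> baire \<Rightarrow> 'a \<Rightarrow> bool" where
  "cauchy_name \<alpha> p x \<longleftrightarrow> (\<forall>i j. i < j \<longrightarrow> dist (\<alpha> (p i)) (\<alpha> (p j)) \<le> (1/2) ^ i)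
                           \<and> (\<lambda>n. \<alpha> (p n)) \<longlonglongrightarrow> x"

definition cauchy_rep :: "(nat \<Rightarrow> 'a::metric_space) \<Rightarrow> 'a rep" where
  "cauchy_rep \<alpha> p = (if \<exists>x. cauchy_name \<alpha> p x then Some (THE x. cauchy_name \<alpha> p x) else None)"

definition basic_ball :: "(nat \<Rightarrow> 'a::metric_space) \<Rightarrow> nat \<Rightarrow> 'a set" where
  "basic_ball \<alpha> m = (SOME B. \<exists>n i k. m = cpair n (cpair i k) \<and> B = ball (\<alpha> n) (real i / real (k + 1)))"

definition closed_rep :: "(nat \<Rightarrow> 'a::metric_space) \<Rightarrow> 'a set rep" where
  "closed_rep \<alpha> p = Some (UNIV - (\<Union>n. basic_ball \<alpha> (p n)))"

definition choice_prob :: "('a set, 'a) problem" where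
  "choice_prob A = A"

end

theory Submission
  imports Defs
begin

text \<open>
  Both reductions are computable translations of input names, with the identity on outputs, and
  they are uniform in the represented space: closed-set names only matter through their range.  A name of the jump of the completion is a sequence
  \<open>p\<^sub>0, p\<^sub>1, \<dots>\<close> of completion names converging to some \<open>q\<close>; reading \<open>p\<^sub>i - 1\<close> only as far as
  the first \<open>i + 1\<close> entries of \<open>p\<^sub>i\<close> gives approximations converging to \<open>q - 1\<close>.  Conversely,
  from a completion name \<open>p\<close> whose \<open>p - 1\<close> converges to \<open>L\<close> one computes a sequence converging
  to a completion name of some \<open>L'\<close> with the same range as \<open>L\<close>: entry \<open>\<langle>i, j\<rangle>\<close> reports the
  \<open>i\<close>-th approximation of \<open>L j\<close> exactly when all later approximations agree with it.  Inputs
  naming \<open>\<bottom>\<close> need no care, since the completed problem accepts every output there.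
\<close>

section \<open>Total recursive functions of argument lists\<close>

definition total_recursive :: "nat \<Rightarrow> (nat list \<Rightarrow> nat) \<Rightarrow> bool" where
  "total_recursive n f \<longleftrightarrow> (\<exists>F. \<forall>xs. length xs = n \<longrightarrow> rec_eval F xs (f xs))"

lemma total_recursive_cong:
  "total_recursive m f \<Longrightarrow> m = n \<Longrightarrow> (\<And>xs. length xs = n \<Longrightarrow> f xs = g xs) \<Longrightarrow> total_recursive n g"
  unfolding total_recursive_def by metis

lemma total_recursive_proj: "i < n \<Longrightarrow> total_recursive n (\<lambda>xs. xs ! i)"
  unfolding total_recursive_def by (auto intro: rec_eval.proj)

lemma total_recursive_hd: "total_recursive (Suc n) (\<lambda>xs. hd xs)"
  by (rule total_recursive_cong[OF total_recursive_proj[of 0]]) (auto simp: length_Suc_conv)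

lemma total_recursive_comp:
  assumes f: "total_recursive (length gs) f" and gs: "\<And>g. g \<in> set gs \<Longrightarrow> total_recursive n g"
  shows "total_recursive n (\<lambda>xs. f (map (\<lambda>g. g xs) gs))"
proof -
  obtain F where F: "\<And>ys. length ys = length gs \<Longrightarrow> rec_eval F ys (f ys)"
    using f unfolding total_recursive_def by blast
  define G where "G g = (SOME G. \<forall>xs. length xs = n \<longrightarrow> rec_eval G xs (g xs))" for g
  have G: "rec_eval (G g) xs (g xs)" if "g \<in> set gs" "length xs = n" for g xs
    using someI_ex[OF gs[OF that(1), unfolded total_recursive_def]] that(2) unfolding G_def by blast
  have "rec_eval (Comp F (map G gs)) xs (f (map (\<lambda>g. g xs) gs))" if "length xs = n" for xs
    using that by (intro rec_eval.comp[OF _ F]) (auto simp: list_all2_map1 list_all2_map2 list_all2_same G)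
  then show ?thesis unfolding total_recursive_def by blast
qed

lemma total_recursive_compose1:
  assumes "total_recursive 1 (\<lambda>xs. h (xs ! 0))" "total_recursive n a"
  shows "total_recursive n (\<lambda>xs. h (a xs))"
  using total_recursive_comp[of "[a]" "\<lambda>xs. h (xs ! 0)" n] assms by simp

lemma total_recursive_compose2:
  assumes "total_recursive 2 (\<lambda>xs. h (xs ! 0) (xs ! 1))" "total_recursive n a" "total_recursive n b"
  shows "total_recursive n (\<lambda>xs. h (a xs) (b xs))"
  using total_recursive_comp[of "[a, b]" "\<lambda>xs. h (xs ! 0) (xs ! 1)" n] assms
  by (simp add: numeral_2_eq_2) blast

lemma total_recursive_reindex:
  assumes "total_recursive (length is) f" and "\<And>i. i \<in> set is \<Longrightarrow> i < n"
  shows "total_recursive n (\<lambda>xs. f (map ((!) xs) is))"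
  using total_recursive_comp[of "map (\<lambda>i xs. xs ! i) is" f n] assms
  by (auto simp: o_def intro: total_recursive_proj)

lemma total_recursive_tl:
  assumes "total_recursive n f"
  shows "total_recursive (Suc n) (\<lambda>xs. f (tl xs))"
proof -
  let ?gs = "map (\<lambda>i xs. xs ! Suc i) [0..<n]"
  have "total_recursive (length ?gs) f" using assms by simp
  then have "total_recursive (Suc n) (\<lambda>xs. f (map (\<lambda>g. g xs) ?gs))"
    by (rule total_recursive_comp) (auto intro: total_recursive_proj)
  then show ?thesis
    by (rule total_recursive_cong) (auto simp: o_def intro!: arg_cong[where f=f] nth_equalityI simp: nth_tl)
qed

lemma total_recursive_subst_hd:
  assumes "total_recursive (Suc n) f" "total_recursive n b"
  shows "total_recursive n (\<lambda>xs. f (b xs # xs))"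
proof -
  let ?gs = "b # map (\<lambda>i xs. xs ! i) [0..<n]"
  have "total_recursive (length ?gs) f" using assms by simp
  then have "total_recursive n (\<lambda>xs. f (map (\<lambda>g. g xs) ?gs))"
    by (rule total_recursive_comp) (auto intro: total_recursive_proj assms(2))
  then show ?thesis by (rule total_recursive_cong) (auto simp: o_def map_nth)
qed

lemma total_recursive_zero: "total_recursive n (\<lambda>xs. 0)"
  unfolding total_recursive_def by (auto intro: rec_eval.zr)

lemma total_recursive_Suc: "total_recursive n a \<Longrightarrow> total_recursive n (\<lambda>xs. Suc (a xs))"
proof -
  have "total_recursive 1 (\<lambda>xs. Suc (xs ! 0))"
    unfolding total_recursive_def by (rule exI[of _ Sc]) (auto simp: length_Suc_conv intro: rec_eval.sc)
  then show "total_recursive n a \<Longrightarrow> ?thesis" by (rule total_recursive_compose1)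
qed

lemma total_recursive_const: "total_recursive n (\<lambda>xs. c)"
  by (induction c) (auto intro: total_recursive_zero total_recursive_Suc)

lemma total_recursive_prim_rec:
  assumes "total_recursive n f" "total_recursive (Suc (Suc n)) g"
    and "\<And>xs. length xs = n \<Longrightarrow> R 0 xs = f xs"
    and "\<And>m xs. length xs = n \<Longrightarrow> R (Suc m) xs = g (R m xs # m # xs)"
  shows "total_recursive (Suc n) (\<lambda>xs. R (hd xs) (tl xs))"
proof -
  obtain F G where F: "\<And>xs. length xs = n \<Longrightarrow> rec_eval F xs (f xs)"
    and G: "\<And>xs. length xs = Suc (Suc n) \<Longrightarrow> rec_eval G xs (g xs)"
    using assms(1,2) unfolding total_recursive_def by blast
  have "rec_eval (Prec F G) (m # xs) (R m xs)" if "length xs = n" for m xs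
  proof (induction m)
    case 0 then show ?case using that by (auto simp: assms(3) intro: rec_eval.prec0 F)
  next
    case (Suc m) then show ?case using that by (auto simp: assms(4) intro!: rec_eval.precS G)
  qed
  then show ?thesis
    unfolding total_recursive_def by (intro exI[of _ "Prec F G"]) (auto simp: length_Suc_conv)
qed

lemma total_recursive_add:
  "total_recursive n a \<Longrightarrow> total_recursive n b \<Longrightarrow>
   total_recursive n (\<lambda>xs. a xs + b xs)"
proof -
  have "total_recursive (Suc 1) (\<lambda>xs. (\<lambda>m ys. m + ys ! 0) (hd xs) (tl xs))"
    by (rule total_recursive_prim_rec[where f="\<lambda>ys. ys ! 0" and g="\<lambda>ys. Suc (ys ! 0)"])
       (auto intro: total_recursive_proj total_recursive_Suc)
  then have "total_recursive 2 (\<lambda>xs. xs ! 0 + xs ! 1)"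
    by (rule total_recursive_cong) (auto simp: length_Suc_conv numeral_eq_Suc)
  then show "total_recursive n a \<Longrightarrow> total_recursive n b \<Longrightarrow> ?thesis"
    by (rule total_recursive_compose2)
qed

lemma total_recursive_diff:
  "total_recursive n a \<Longrightarrow> total_recursive n b \<Longrightarrow>
   total_recursive n (\<lambda>xs. a xs - b xs)"
proof -
  have "total_recursive (Suc 0) (\<lambda>xs. (\<lambda>m ys. m - 1) (hd xs) (tl xs))"
    by (rule total_recursive_prim_rec[where f="\<lambda>ys. 0" and g="\<lambda>ys. ys ! 1"])
       (auto intro: total_recursive_proj total_recursive_const)
  then have "total_recursive 1 (\<lambda>xs. xs ! 0 - 1)"
    by (rule total_recursive_cong) (auto simp: length_Suc_conv numeral_eq_Suc)
  then have "total_recursive (Suc 1) (\<lambda>xs. (\<lambda>m ys. ys ! 0 - m) (hd xs) (tl xs))"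
    by (intro total_recursive_prim_rec[where f="\<lambda>ys. ys ! 0" and g="\<lambda>ys. ys ! 0 - 1"])
       (auto intro: total_recursive_proj total_recursive_compose1)
  then have "total_recursive 2 (\<lambda>xs. xs ! 1 - xs ! 0)"
    by (rule total_recursive_cong) (auto simp: length_Suc_conv numeral_eq_Suc)
  then show "total_recursive n a \<Longrightarrow> total_recursive n b \<Longrightarrow> ?thesis"
    using total_recursive_compose2[of "\<lambda>x y. y - x" n b a] by simp
qed

lemma total_recursive_mult:
  "total_recursive n a \<Longrightarrow> total_recursive n b \<Longrightarrow>
   total_recursive n (\<lambda>xs. a xs * b xs)"
proof -
  have "total_recursive (Suc 1) (\<lambda>xs. (\<lambda>m ys. m * ys ! 0) (hd xs) (tl xs))"
    by (rule total_recursive_prim_rec[where f="\<lambda>ys. 0" and g="\<lambda>ys. ys ! 0 + ys ! 2"])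
       (auto intro!: total_recursive_add total_recursive_proj total_recursive_const)
  then have "total_recursive 2 (\<lambda>xs. xs ! 0 * xs ! 1)"
    by (rule total_recursive_cong) (auto simp: length_Suc_conv numeral_eq_Suc)
  then show "total_recursive n a \<Longrightarrow> total_recursive n b \<Longrightarrow> ?thesis"
    by (rule total_recursive_compose2)
qed

lemma total_recursive_sum_lessThan:
  assumes "total_recursive (Suc n) f"
  shows "total_recursive (Suc n) (\<lambda>xs. \<Sum>u<hd xs. f (u # tl xs))"
proof (rule total_recursive_prim_rec[where f="\<lambda>ys. 0" and g="\<lambda>ys. ys ! 0 + f (tl ys)"])
  show "total_recursive (Suc (Suc n)) (\<lambda>ys. ys ! 0 + f (tl ys))"
    using assms by (intro total_recursive_add total_recursive_proj total_recursive_tl) auto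
qed (auto intro: total_recursive_const)

definition recursive_pred :: "nat \<Rightarrow> (nat list \<Rightarrow> bool) \<Rightarrow> bool" where
  "recursive_pred n P \<longleftrightarrow> total_recursive n (\<lambda>xs. if P xs then 1 else 0)"

lemma recursive_pred_cong:
  "recursive_pred m P \<Longrightarrow> m = n \<Longrightarrow> (\<And>xs. length xs = n \<Longrightarrow> P xs = Q xs)
   \<Longrightarrow> recursive_pred n Q"
  unfolding recursive_pred_def by (erule total_recursive_cong) auto

lemma total_recursive_if:
  assumes "recursive_pred n P" "total_recursive n a" "total_recursive n b"
  shows "total_recursive n (\<lambda>xs. if P xs then a xs else b xs)"
proof -
  have "total_recursive n (\<lambda>xs. (if P xs then 1 else 0) * a xs + (1 - (if P xs then 1 else 0)) * b xs)"
    using assms unfolding recursive_pred_def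
    by (intro total_recursive_add total_recursive_mult total_recursive_diff total_recursive_const)
  then show ?thesis by (rule total_recursive_cong) auto
qed

lemma recursive_pred_le:
  assumes "total_recursive n a" "total_recursive n b"
  shows "recursive_pred n (\<lambda>xs. a xs \<le> b xs)"
proof -
  have "total_recursive n (\<lambda>xs. 1 - (a xs - b xs))"
    using assms by (intro total_recursive_diff total_recursive_const)
  then show ?thesis unfolding recursive_pred_def by (rule total_recursive_cong) auto
qed

lemma recursive_pred_not: "recursive_pred n P \<Longrightarrow> recursive_pred n (\<lambda>xs. \<not> P xs)"
  unfolding recursive_pred_def
  by (drule total_recursive_diff[OF total_recursive_const[of n 1]]) (auto elim: total_recursive_cong)

lemma recursive_pred_conj:
  "recursive_pred n P \<Longrightarrow> recursive_pred n Q \<Longrightarrow>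
   recursive_pred n (\<lambda>xs. P xs \<and> Q xs)"
  unfolding recursive_pred_def by (drule (1) total_recursive_mult) (auto elim: total_recursive_cong)

lemma recursive_pred_imp:
  "recursive_pred n P \<Longrightarrow> recursive_pred n Q \<Longrightarrow>
   recursive_pred n (\<lambda>xs. P xs \<longrightarrow> Q xs)"
  using recursive_pred_not[OF recursive_pred_conj[OF _ recursive_pred_not]] by simp

lemma recursive_pred_less:
  "total_recursive n a \<Longrightarrow> total_recursive n b \<Longrightarrow>
   recursive_pred n (\<lambda>xs. a xs < b xs)"
  using recursive_pred_not[OF recursive_pred_le[of n b a]] by (simp add: not_le)

lemma recursive_pred_eq:
  "total_recursive n a \<Longrightarrow> total_recursive n b \<Longrightarrow>
   recursive_pred n (\<lambda>xs. a xs = b xs)"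
  using recursive_pred_conj[OF recursive_pred_le[of n a b] recursive_pred_le[of n b a]] by (simp add: eq_iff)

lemma recursive_pred_all_less:
  assumes "recursive_pred (Suc n) (\<lambda>xs. P (hd xs) (tl xs))" "total_recursive n b"
  shows "recursive_pred n (\<lambda>xs. \<forall>u<b xs. P u xs)"
proof -
  have "total_recursive (Suc n) (\<lambda>xs. 1 - (if P (hd xs) (tl xs) then 1 else 0))"
    using assms(1) unfolding recursive_pred_def by (intro total_recursive_diff total_recursive_const)
  then have "total_recursive (Suc n) (\<lambda>xs. \<Sum>u<hd xs. 1 - (if P u (tl xs) then 1 else 0))"
    by (rule total_recursive_cong[OF total_recursive_sum_lessThan]) auto
  then have "total_recursive n (\<lambda>xs. 1 - (\<Sum>u<b xs. 1 - (if P u xs then 1 else 0)))"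
    by (intro total_recursive_diff total_recursive_const) (drule total_recursive_subst_hd[OF _ assms(2)], simp)
  then show ?thesis
    unfolding recursive_pred_def
    by (rule total_recursive_cong) (auto simp: Suc_le_eq zero_less_iff_neq_zero sum_eq_0_iff simp del: neq0_conv)
qed

lemma total_recursive_Least:
  assumes "recursive_pred (Suc n) (\<lambda>xs. P (hd xs) (tl xs))" and "\<And>xs. length xs = n \<Longrightarrow> \<exists>m. P m xs"
  shows "total_recursive n (\<lambda>xs. LEAST m. P m xs)"
proof -
  have "total_recursive (Suc n) (\<lambda>xs. 1 - (if P (hd xs) (tl xs) then 1 else 0))"
    using assms(1) unfolding recursive_pred_def by (intro total_recursive_diff total_recursive_const)
  then obtain F where F0: "\<forall>xs. length xs = Suc n \<longrightarrow> rec_eval F xs (1 - (if P (hd xs) (tl xs) then 1 else 0))"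
    unfolding total_recursive_def by blast
  have F: "rec_eval F (m # xs) (if P m xs then 0 else 1)" if "length xs = n" for m xs
    using F0[rule_format, of "m # xs"] that by (cases "P m xs") simp_all
  have "rec_eval (Mn F) xs (LEAST m. P m xs)" if "length xs = n" for xs
  proof (rule rec_eval.mn)
    show "rec_eval F ((LEAST m. P m xs) # xs) 0"
      using F[OF that, of "LEAST m. P m xs"] LeastI_ex[OF assms(2)[OF that]] by simp
    show "\<forall>k<LEAST m. P m xs. \<exists>y>0. rec_eval F (k # xs) y"
    proof (intro allI impI)
      fix k assume "k < (LEAST m. P m xs)"
      then have "\<not> P k xs" by (rule not_less_Least)
      then show "\<exists>y>0. rec_eval F (k # xs) y" using F[OF that, of k] by auto
    qed
  qed
  then show ?thesis unfolding total_recursive_def by blast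
qed

lemmas total_recursive_arith_intros =
  total_recursive_proj total_recursive_const total_recursive_Suc total_recursive_add total_recursive_diff
  total_recursive_mult total_recursive_if recursive_pred_le recursive_pred_less recursive_pred_eq
  recursive_pred_not recursive_pred_conj recursive_pred_imp

section \<open>Pairing and codes of finite sequences\<close>

lemma total_recursive_triangle: "total_recursive n a \<Longrightarrow> total_recursive n (\<lambda>xs. triangle (a xs))"
proof -
  have "total_recursive (Suc 0) (\<lambda>xs. (\<lambda>m ys. triangle m) (hd xs) (tl xs))"
    by (rule total_recursive_prim_rec[where f="\<lambda>ys. 0" and g="\<lambda>ys. ys ! 0 + Suc (ys ! 1)"])
       (intro total_recursive_arith_intros | simp)+
  then have "total_recursive 1 (\<lambda>xs. triangle (xs ! 0))"
    by (rule total_recursive_cong) (auto simp: length_Suc_conv)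
  then show "total_recursive n a \<Longrightarrow> ?thesis" by (rule total_recursive_compose1)
qed

definition triangle_root :: "nat \<Rightarrow> nat" where
  "triangle_root m = (LEAST s. m < triangle (Suc s))"

lemma triangle_root_bounds: "triangle (triangle_root m) \<le> m" "m < triangle (Suc (triangle_root m))"
proof -
  have ex: "\<exists>s. m < triangle (Suc s)" by (rule exI[of _ m]) (simp add: triangle_def)
  show "m < triangle (Suc (triangle_root m))"
    unfolding triangle_root_def by (rule LeastI_ex[OF ex])
  show "triangle (triangle_root m) \<le> m"
  proof (cases "triangle_root m")
    case (Suc s)
    then have "s < triangle_root m" by simp
    then have "\<not> m < triangle (Suc s)" unfolding triangle_root_def by (rule not_less_Least)
    then show ?thesis using Suc by simp
  qed simp
qed

lemma prod_decode_triangle_root: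
  "prod_decode m = (m - triangle (triangle_root m), triangle_root m - (m - triangle (triangle_root m)))"
proof -
  define s a where "s = triangle_root m" and "a = m - triangle s"
  have "m < triangle s + Suc s" using triangle_root_bounds(2)[of m] unfolding s_def by simp
  then have "a \<le> s" unfolding a_def by linarith
  then have "a + (s - a) = s" by simp
  moreover have "triangle s + a = m" using triangle_root_bounds(1)[of m] unfolding a_def s_def by simp
  ultimately have "prod_encode (a, s - a) = m" unfolding prod_encode_def by simp
  then have "prod_decode m = (a, s - a)" by (metis prod_encode_inverse)
  then show ?thesis unfolding a_def s_def .
qed

lemma total_recursive_triangle_root: "total_recursive n a \<Longrightarrow> total_recursive n (\<lambda>xs. triangle_root (a xs))"
proof -
  have "total_recursive 1 (\<lambda>xs. LEAST s. xs ! 0 < triangle (Suc s))"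
  proof (rule total_recursive_Least)
    have "recursive_pred (Suc 1) (\<lambda>ys. ys ! 1 < triangle (Suc (ys ! 0)))"
      by (intro total_recursive_arith_intros total_recursive_triangle | simp)+
    then show "recursive_pred (Suc 1) (\<lambda>ys. tl ys ! 0 < triangle (Suc (hd ys)))"
      by (rule recursive_pred_cong) (auto simp: length_Suc_conv)
    show "\<exists>m. xs ! 0 < triangle (Suc m)" for xs
      by (intro exI[of _ "xs ! 0"]) (simp add: triangle_def)
  qed
  then have "total_recursive 1 (\<lambda>xs. triangle_root (xs ! 0))"
    by (rule total_recursive_cong) (auto simp: length_Suc_conv triangle_root_def)
  then show "total_recursive n a \<Longrightarrow> ?thesis" by (rule total_recursive_compose1)
qed

lemma total_recursive_prod_decode:
  assumes "total_recursive n a"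
  shows "total_recursive n (\<lambda>xs. fst (prod_decode (a xs)))" "total_recursive n (\<lambda>xs. snd (prod_decode (a xs)))"
  unfolding prod_decode_triangle_root fst_conv snd_conv
  by (intro total_recursive_arith_intros total_recursive_triangle total_recursive_triangle_root assms)+

lemma total_recursive_prod_encode:
  "total_recursive n a \<Longrightarrow> total_recursive n b \<Longrightarrow> total_recursive n (\<lambda>xs. prod_encode (a xs, b xs))"
  unfolding prod_encode_def by (simp, intro total_recursive_arith_intros total_recursive_triangle)

lemma cpair_eq_prod_encode: "cpair i j = prod_encode (j, i)"
  by (simp add: cpair_def prod_encode_def add.commute)

lemma prod_decode_cpair: "prod_decode (cpair i j) = (j, i)"
  by (simp add: cpair_eq_prod_encode)

lemma cpair_prod_decode: "cpair (snd (prod_decode n)) (fst (prod_decode n)) = n"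
  by (simp add: cpair_eq_prod_encode)

lemma triangle_mono: "m \<le> n \<Longrightarrow> triangle m \<le> triangle n"
  unfolding triangle_def by (intro div_le_mono mult_le_mono) auto

lemma cpair_mono: "i \<le> i' \<Longrightarrow> j \<le> j' \<Longrightarrow> cpair i j \<le> cpair i' j'"
  unfolding cpair_def by (intro add_mono triangle_mono) auto

lemma le_cpair: "i \<le> cpair i j"
  by (simp add: cpair_eq_prod_encode le_prod_encode_2)

definition code_tl :: "nat \<Rightarrow> nat" where
  "code_tl c = (if c = 0 then 0 else snd (prod_decode (c - 1)))"

definition code_hd :: "nat \<Rightarrow> nat" where
  "code_hd c = fst (prod_decode (c - 1))"

definition code_nth :: "nat \<Rightarrow> nat \<Rightarrow> nat" where
  "code_nth c t = code_hd ((code_tl ^^ t) c)"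

lemma list_encode_eq_0_iff: "list_encode xs = 0 \<longleftrightarrow> xs = []"
  by (cases xs) auto

lemma funpow_code_tl_list_encode: "(code_tl ^^ t) (list_encode xs) = list_encode (drop t xs)"
proof (induction t arbitrary: xs)
  case (Suc t)
  have "code_tl (list_encode xs) = list_encode (tl xs)" by (cases xs) (auto simp: code_tl_def)
  then show ?case using Suc by (simp add: funpow_Suc_right drop_Suc del: funpow.simps)
qed simp

lemma funpow_code_tl_prefix_code: "(code_tl ^^ t) (prefix_code p k) = 0 \<longleftrightarrow> k \<le> t"
  by (simp add: prefix_code_def funpow_code_tl_list_encode list_encode_eq_0_iff)

lemma code_nth_prefix_code:
  assumes "t < k"
  shows "code_nth (prefix_code p k) t = p t"
proof -
  have "drop t (map p [0..<k]) = p t # map p [Suc t..<k]"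
    using assms by (simp only: drop_map drop_upt) (simp add: upt_conv_Cons)
  then show ?thesis
    unfolding code_nth_def prefix_code_def funpow_code_tl_list_encode by (simp add: code_hd_def)
qed

lemma total_recursive_funpow_code_tl:
  assumes "total_recursive n a" "total_recursive n b"
  shows "total_recursive n (\<lambda>xs. (code_tl ^^ a xs) (b xs))"
proof -
  have "total_recursive n (\<lambda>xs. code_tl (b xs))" if "total_recursive n b" for n b
    unfolding code_tl_def using that by (intro total_recursive_arith_intros total_recursive_prod_decode)
  then have "total_recursive (Suc 1) (\<lambda>xs. (\<lambda>t ys. (code_tl ^^ t) (ys ! 0)) (hd xs) (tl xs))"
    by (intro total_recursive_prim_rec[where f="\<lambda>ys. ys ! 0" and g="\<lambda>ys. code_tl (ys ! 0)"])
       (auto intro: total_recursive_proj)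
  then have "total_recursive 2 (\<lambda>xs. (code_tl ^^ (xs ! 0)) (xs ! 1))"
    by (rule total_recursive_cong) (auto simp: length_Suc_conv numeral_eq_Suc)
  then show ?thesis using assms by (rule total_recursive_compose2)
qed

lemma total_recursive_code_nth:
  "total_recursive n a \<Longrightarrow> total_recursive n b \<Longrightarrow> total_recursive n (\<lambda>xs. code_nth (a xs) (b xs))"
  unfolding code_nth_def code_hd_def
  by (intro total_recursive_arith_intros total_recursive_prod_decode total_recursive_funpow_code_tl)

lemmas total_recursive_intros =
  total_recursive_arith_intros total_recursive_triangle total_recursive_prod_decode total_recursive_prod_encode
  total_recursive_funpow_code_tl total_recursive_code_nth total_recursive_hd total_recursive_tl

lemma total_rec2I:
  assumes "total_recursive 2 (\<lambda>xs. h (xs ! 0) (xs ! 1))"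
  shows "total_rec2 h"
proof -
  obtain F where "\<forall>xs. length xs = 2 \<longrightarrow> rec_eval F xs (h (xs ! 0) (xs ! 1))"
    using assms unfolding total_recursive_def by blast
  then have "rec_eval F [x, y] (h x y)" for x y by (auto dest: spec[of _ "[x, y]"])
  then show ?thesis unfolding total_rec2_def by blast
qed

lemma computable_map_by_modulus:
  assumes F: "total_recursive 2 (\<lambda>xs. F (code_nth (xs ! 0)) (xs ! 1))"
    and B: "total_recursive 1 (\<lambda>xs. B (xs ! 0))"
    and modulus: "\<And>p p' n. (\<And>k. k \<le> B n \<Longrightarrow> p k = p' k) \<Longrightarrow> F p n = F p' n"
  shows "computable_map (\<lambda>p. Some (F p))"
proof -
  define h where "h c n = (if (code_tl ^^ B n) c = 0 then 0 else Suc (F (code_nth c) n))" for c n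
  have "total_recursive 2 (\<lambda>xs. h (xs ! 0) (xs ! 1))"
    unfolding h_def
    by (intro total_recursive_arith_intros total_recursive_funpow_code_tl total_recursive_compose1[OF B] F; simp)
  then have "total_rec2 h" by (rule total_rec2I)
  moreover
  have pos: "0 < h (prefix_code p k) n \<longleftrightarrow> B n < k"
    for p k n by (simp add: h_def funpow_code_tl_prefix_code not_le)
  have "(LEAST k. 0 < h (prefix_code p k) n) = Suc (B n)" for p n
    unfolding pos by (rule Least_equality) auto
  moreover have "F (code_nth (prefix_code p (Suc (B n)))) n = F p n" for p n
    by (rule modulus) (simp add: code_nth_prefix_code)
  ultimately show ?thesis
    unfolding computable_map_def using pos
    by (intro exI[of _ h]) (auto simp: h_def funpow_code_tl_prefix_code)
qed

lemma computable_map_id: "computable_map (\<lambda>p. Some p)"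
  using computable_map_by_modulus[where F="\<lambda>p. p" and B="\<lambda>n. n"]
  by (simp add: total_recursive_code_nth total_recursive_proj)

section \<open>Finite stages of p - 1\<close>

definition nonzero_prefix :: "baire \<Rightarrow> nat \<Rightarrow> nat list" where
  "nonzero_prefix a t = filter (\<lambda>x. x \<noteq> 0) (map a [0..<t])"

text \<open>The value of \<open>minus1 a m\<close> as far as it is determined by the first \<open>t\<close> entries of \<open>a\<close>,
  and 0 while it is not.\<close>

definition minus1_stage :: "baire \<Rightarrow> nat \<Rightarrow> nat \<Rightarrow> nat" where
  "minus1_stage a t m = (if m < length (nonzero_prefix a t) then nonzero_prefix a t ! m - 1 else 0)"

lemma nonzero_prefix_Suc: "nonzero_prefix a (Suc t) = nonzero_prefix a t @ (if a t = 0 then [] else [a t])"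
  by (simp add: nonzero_prefix_def)

lemma minus1_stage_Suc:
  "minus1_stage a (Suc t) m =
     (if a t \<noteq> 0 \<and> m = length (nonzero_prefix a t) then a t - 1 else minus1_stage a t m)"
  by (auto simp: minus1_stage_def nonzero_prefix_Suc nth_append)

lemma total_recursive_nonzero_prefix_stage:
  assumes a: "total_recursive (Suc n) (\<lambda>xs. a (hd xs) (tl xs))"
    and t: "total_recursive n t" and m: "total_recursive n m"
  shows "total_recursive n (\<lambda>xs. prod_encode (length (nonzero_prefix (\<lambda>k. a k xs) (t xs)),
                                                  minus1_stage (\<lambda>k. a k xs) (t xs) (m xs)))"
proof -
  define S where "S t' ys = prod_encode (length (nonzero_prefix (\<lambda>k. a k (tl ys)) t'),
                                          minus1_stage (\<lambda>k. a k (tl ys)) t' (hd ys))" for t' ys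
  define step where "step st v m = prod_encode (fst (prod_decode st) + (if v = 0 then 0 else 1),
      if v \<noteq> 0 \<and> m = fst (prod_decode st) then v - 1 else snd (prod_decode st))" for st v m
  have "total_recursive (length (1 # map (\<lambda>i. 3 + i) [0..<n])) (\<lambda>xs. a (hd xs) (tl xs))"
    using a by simp
  then have "total_recursive (Suc (Suc (Suc n))) (\<lambda>zs. a (zs ! 1) (drop 3 zs))"
    by (rule total_recursive_cong[OF total_recursive_reindex])
       (auto intro!: arg_cong[where f="a _"] nth_equalityI)
  then have "total_recursive (Suc (Suc (Suc n))) (\<lambda>zs. step (zs ! 0) (a (zs ! 1) (drop 3 zs)) (zs ! 2))"
    unfolding step_def
    by (intro total_recursive_arith_intros total_recursive_prod_decode total_recursive_prod_encode; simp)
  moreover have "S 0 ys = 0" for ys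
    by (simp add: S_def minus1_stage_def nonzero_prefix_def prod_encode_def)
  moreover have "S (Suc t') ys = step (S t' ys) (a t' (tl ys)) (hd ys)" for t' ys
    by (cases "a t' (tl ys) = 0") (simp_all add: S_def step_def nonzero_prefix_Suc minus1_stage_Suc)
  ultimately have "total_recursive (Suc (Suc n)) (\<lambda>ys. S (hd ys) (tl ys))"
    by (intro total_recursive_prim_rec[where f="\<lambda>ys. 0", OF total_recursive_const])
       (auto simp: length_Suc_conv numeral_eq_Suc)
  then have "total_recursive (Suc n) (\<lambda>ys. S (t (tl ys)) ys)"
    using total_recursive_subst_hd[OF _ total_recursive_tl[OF t]] by fastforce
  then show ?thesis
    using total_recursive_subst_hd[OF _ m] by (fastforce simp: S_def)
qed

lemma total_recursive_nonzero_prefix_length: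
  "total_recursive (Suc n) (\<lambda>xs. a (hd xs) (tl xs)) \<Longrightarrow> total_recursive n t
   \<Longrightarrow> total_recursive n (\<lambda>xs. length (nonzero_prefix (\<lambda>k. a k xs) (t xs)))"
  using total_recursive_prod_decode(1)[OF total_recursive_nonzero_prefix_stage[OF _ _ total_recursive_const]]
  by simp

lemma total_recursive_minus1_stage:
  "total_recursive (Suc n) (\<lambda>xs. a (hd xs) (tl xs)) \<Longrightarrow> total_recursive n t \<Longrightarrow> total_recursive n m
   \<Longrightarrow> total_recursive n (\<lambda>xs. minus1_stage (\<lambda>k. a k xs) (t xs) (m xs))"
  using total_recursive_prod_decode(2)[OF total_recursive_nonzero_prefix_stage] by simp

lemma nonzero_prefix_append: "t \<le> t' \<Longrightarrow> \<exists>r. nonzero_prefix a t' = nonzero_prefix a t @ r"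
  unfolding nonzero_prefix_def by (metis filter_append map_append le0 upt_add_eq_append le_add_diff_inverse)

lemma nonzero_prefix_cong: "(\<And>k. k < t \<Longrightarrow> a k = b k) \<Longrightarrow> nonzero_prefix a t = nonzero_prefix b t"
  unfolding nonzero_prefix_def by (intro arg_cong[where f="filter _"] map_cong) auto

lemma minus1_stage_cong: "(\<And>k. k < t \<Longrightarrow> a k = b k) \<Longrightarrow> minus1_stage a t m = minus1_stage b t m"
  unfolding minus1_stage_def by (drule nonzero_prefix_cong) simp

lemma minus1_stage_mono:
  assumes "m < length (nonzero_prefix a t)" and "t \<le> t'"
  shows "m < length (nonzero_prefix a t')" and "minus1_stage a t' m = minus1_stage a t m"
proof -
  obtain r where "nonzero_prefix a t' = nonzero_prefix a t @ r" using nonzero_prefix_append[OF assms(2)] by blast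
  then show "m < length (nonzero_prefix a t')" "minus1_stage a t' m = minus1_stage a t m"
    using assms(1) by (simp_all add: minus1_stage_def nth_append)
qed

lemma nonzero_prefix_skip_zeros:
  assumes "t \<le> t'" and "\<And>x. t \<le> x \<Longrightarrow> x < t' \<Longrightarrow> a x = 0"
  shows "nonzero_prefix a t' = nonzero_prefix a t"
proof -
  have "[0..<t'] = [0..<t] @ [t..<t']" using assms(1) by (metis le0 upt_add_eq_append le_add_diff_inverse)
  moreover have "filter (\<lambda>x. x \<noteq> 0) (map a [t..<t']) = []"
    using assms(2) by (auto simp: filter_empty_conv)
  ultimately show ?thesis by (simp add: nonzero_prefix_def)
qed

lemma nonzero_prefix_enumerate:
  assumes inf: "infinite {n. a n \<noteq> 0}"
  shows "nonzero_prefix a (Suc (enumerate {n. a n \<noteq> 0} j)) = map (\<lambda>k. a (enumerate {n. a n \<noteq> 0} k)) [0..<Suc j]"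
    (is "nonzero_prefix a (Suc (?e j)) = _")
proof (induction j)
  case 0
  have "nonzero_prefix a (?e 0) = nonzero_prefix a 0"
  proof (rule nonzero_prefix_skip_zeros)
    fix x assume "x < ?e 0"
    then show "a x = 0" using not_less_Least[of x "\<lambda>n. a n \<noteq> 0"] by (simp add: enumerate_0)
  qed simp
  moreover have "a (?e 0) \<noteq> 0" using enumerate_in_set[OF inf] by simp
  ultimately show ?case by (simp add: nonzero_prefix_Suc nonzero_prefix_def)
next
  case (Suc j)
  have "nonzero_prefix a (?e (Suc j)) = nonzero_prefix a (Suc (?e j))"
  proof (rule nonzero_prefix_skip_zeros)
    show "Suc (?e j) \<le> ?e (Suc j)" using enumerate_step[OF inf, of j] by simp
    fix x assume "Suc (?e j) \<le> x" "x < ?e (Suc j)"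
    then show "a x = 0"
      using not_less_Least[of x "\<lambda>s. a s \<noteq> 0 \<and> ?e j < s"] enumerate_Suc''[OF inf, of j] by auto
  qed
  moreover have "a (?e (Suc j)) \<noteq> 0" using enumerate_in_set[OF inf] by simp
  ultimately show ?case using Suc.IH by (simp add: nonzero_prefix_Suc)
qed

lemma minus1_stage_enumerate:
  assumes inf: "infinite {n. a n \<noteq> 0}" and t: "enumerate {n. a n \<noteq> 0} j < t"
  shows "j < length (nonzero_prefix a t)" and "minus1_stage a t j = minus1 a j"
proof -
  let ?e = "enumerate {n. a n \<noteq> 0}"
  have "j < length (nonzero_prefix a (Suc (?e j)))" and "minus1_stage a (Suc (?e j)) j = minus1 a j"
    unfolding minus1_stage_def nonzero_prefix_enumerate[OF inf] by (simp_all add: minus1_def del: upt_Suc)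
  then show "j < length (nonzero_prefix a t)" "minus1_stage a t j = minus1 a j"
    using minus1_stage_mono[of j a "Suc (?e j)" t] t by simp_all
qed

lemma minus1_stage_eq_minus1:
  assumes inf: "infinite {n. a n \<noteq> 0}" and m: "m < length (nonzero_prefix a t)"
  shows "minus1_stage a t m = minus1 a m"
proof -
  let ?t = "max t (Suc (enumerate {n. a n \<noteq> 0} m))"
  have "minus1_stage a ?t m = minus1_stage a t m" using minus1_stage_mono(2)[OF m, of ?t] by simp
  moreover have "minus1_stage a ?t m = minus1 a m" using minus1_stage_enumerate(2)[OF inf, of m ?t] by simp
  ultimately show ?thesis by simp
qed

lemma enumerate_UNIV_nat: "enumerate (UNIV :: nat set) k = k"
proof (induction k)
  case (Suc k)
  have "enumerate (UNIV :: nat set) (Suc k) = (LEAST s. enumerate UNIV k < s)"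
    using enumerate_Suc''[of "UNIV :: nat set" k] by simp
  also have "\<dots> = Suc k" using Suc by (intro Least_equality) auto
  finally show ?case .
qed (simp add: enumerate_0)

lemma minus1_all_nonzero: "(\<And>n. p n \<noteq> 0) \<Longrightarrow> minus1 p = (\<lambda>k. p k - 1)"
  unfolding minus1_def by (simp add: enumerate_UNIV_nat)

lemma range_minus1:
  assumes "infinite {n. p n \<noteq> 0}"
  shows "range (minus1 p) = (\<lambda>n. p n - 1) ` {n. p n \<noteq> 0}"
proof -
  have "range (minus1 p) = (\<lambda>n. p n - 1) ` range (enumerate {n. p n \<noteq> 0})"
    unfolding minus1_def by (simp add: image_image)
  then show ?thesis using range_enumerate[OF assms] by simp
qed

lemma range_minus1_eq_range:
  assumes entries: "\<And>n. q n \<noteq> 0 \<Longrightarrow> q n = Suc (L (fst (prod_decode n)))"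
    and eventually: "\<And>j. \<exists>N. \<forall>i\<ge>N. q (cpair i j) = Suc (L j)"
  shows "infinite {n. q n \<noteq> 0}" and "range (minus1 q) = range L"
proof -
  show inf: "infinite {n. q n \<noteq> 0}"
    unfolding infinite_nat_iff_unbounded_le
  proof
    fix m
    obtain N where "\<forall>i\<ge>N. q (cpair i 0) = Suc (L 0)" using eventually by blast
    then have "q (cpair (max m N) 0) \<noteq> 0" by simp
    then show "\<exists>n\<ge>m. n \<in> {n. q n \<noteq> 0}" using le_cpair[of "max m N" 0] by fastforce
  qed
  have "(\<lambda>n. q n - 1) ` {n. q n \<noteq> 0} = range L"
  proof
    show "(\<lambda>n. q n - 1) ` {n. q n \<noteq> 0} \<subseteq> range L"
    proof
      fix y assume "y \<in> (\<lambda>n. q n - 1) ` {n. q n \<noteq> 0}"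
      then obtain n where "q n \<noteq> 0" "y = q n - 1" by blast
      then show "y \<in> range L" using entries[of n] by simp
    qed
    show "range L \<subseteq> (\<lambda>n. q n - 1) ` {n. q n \<noteq> 0}"
    proof
      fix y assume "y \<in> range L"
      then obtain j where j: "y = L j" by blast
      obtain N where "\<forall>i\<ge>N. q (cpair i j) = Suc (L j)" using eventually by blast
      then have "q (cpair N j) = Suc y" using j by simp
      then show "y \<in> (\<lambda>n. q n - 1) ` {n. q n \<noteq> 0}" by (intro image_eqI[of _ _ "cpair N j"]) simp_all
    qed
  qed
  then show "range (minus1 q) = range L" using range_minus1[OF inf] by simp
qed

lemma baire_lim_rel_unique: "baire_lim_rel p q \<Longrightarrow> baire_lim_rel p q' \<Longrightarrow> q = q'"
proof (rule ext)
  fix j assume "baire_lim_rel p q" "baire_lim_rel p q'"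
  then obtain N N' where "\<forall>i\<ge>N. p (cpair i j) = q j" "\<forall>i\<ge>N'. p (cpair i j) = q' j"
    unfolding baire_lim_rel_def by blast
  then show "q j = q' j" using max.cobounded1[of N N'] max.cobounded2[of N' N] by (metis max.commute)
qed

lemma baire_lim_rel_eq:
  assumes "baire_lim_rel p q" and "\<forall>s\<ge>N. p (cpair s n) = v"
  shows "q n = v"
proof -
  obtain N' where "\<forall>s\<ge>N'. p (cpair s n) = q n" using assms(1) unfolding baire_lim_rel_def by blast
  then show ?thesis using assms(2) by (metis max.cobounded1 max.cobounded2)
qed

lemma jump_rep_eq: "baire_lim_rel p q \<Longrightarrow> jump_rep d p = d q"
  unfolding jump_rep_def using baire_lim_rel_unique by (metis (mono_tags, lifting) the_equality)

lemma compl_rep_defined: "compl_rep d p \<noteq> None"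
  by (simp add: compl_rep_def split: option.splits)

lemma compl_rep_eq_Some_Some:
  "compl_rep d p = Some (Some x) \<longleftrightarrow> infinite {n. p n \<noteq> 0} \<and> d (minus1 p) = Some x"
  by (simp add: compl_rep_def split: option.splits)

lemma closed_rep_eq: "closed_rep \<alpha> p = Some (UNIV - \<Union> (basic_ball \<alpha> ` range p))"
  by (simp add: closed_rep_def image_image)

lemma closed_rep_range_invariant: "range p = range p' \<Longrightarrow> closed_rep \<alpha> p = closed_rep \<alpha> p'"
  unfolding closed_rep_eq by (simp only:)

lemma compl_prob_nonempty: "compl_prob f xo \<noteq> {}"
  by (auto simp: compl_prob_def split: option.splits)

lemma sW_le_compl_prob_by_name_translation:
  assumes K: "computable_map (\<lambda>p. Some (K p))"
    and defined: "\<And>p xo. dX p = Some xo \<Longrightarrow> dZ (K p) \<noteq> None"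
    and correct: "\<And>p x. dX p = Some (Some x) \<Longrightarrow> dZ (K p) = Some (Some x)"
  shows "sW_le dX dY (compl_prob f) dZ dY (compl_prob f)"
  unfolding sW_le_def
proof (intro exI conjI allI impI)
  show "computable_map (\<lambda>p. Some p)" by (rule computable_map_id)
  show "computable_map (\<lambda>p. Some (K p))" by (rule K)
  fix G assume G: "realizes dZ dY (compl_prob f) G"
  show "realizes dX dY (compl_prob f) (\<lambda>p. Option.bind (Some (K p)) (\<lambda>r. Option.bind (G r) (\<lambda>q. Some q)))"
    unfolding realizes_def
  proof (intro allI impI)
    fix p xo assume "dX p = Some xo \<and> compl_prob f xo \<noteq> {}"
    then have xo: "dX p = Some xo" by simp
    obtain zo where zo: "dZ (K p) = Some zo" using defined[OF xo] by blast
    have sub: "compl_prob f zo \<subseteq> compl_prob f xo"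
    proof (cases xo)
      case None then show ?thesis by (simp add: compl_prob_def)
    next
      case (Some x)
      then have "dZ (K p) = Some (Some x)" using xo by (intro correct) simp
      then show ?thesis using zo Some by simp
    qed
    obtain q y where "G (K p) = Some q" "dY q = Some y" "y \<in> compl_prob f zo"
      using G zo compl_prob_nonempty[of f zo] unfolding realizes_def by blast
    then show "\<exists>q y. Option.bind (Some (K p)) (\<lambda>r. Option.bind (G r) (\<lambda>q. Some q)) = Some q
                   \<and> dY q = Some y \<and> y \<in> compl_prob f xo"
      using sub by auto
  qed
qed

section \<open>From the jump of the completion to the completion of the jump\<close>

text \<open>Every entry is a successor, so \<open>minus1\<close> deletes no entry of this name.\<close>

definition compl_jump_name :: "baire \<Rightarrow> baire" where
  "compl_jump_name p N =
     (let i = snd (prod_decode N); j = fst (prod_decode N) in Suc (minus1_stage (\<lambda>n. p (cpair i n)) (Suc i) j))"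

lemma compl_jump_name_cpair:
  "compl_jump_name p (cpair i j) = Suc (minus1_stage (\<lambda>n. p (cpair i n)) (Suc i) j)"
  by (simp add: compl_jump_name_def prod_decode_cpair)

lemma computable_compl_jump_name: "computable_map (\<lambda>p. Some (compl_jump_name p))"
proof (rule computable_map_by_modulus[where B="\<lambda>N. cpair (snd (prod_decode N)) (snd (prod_decode N))"])
  show "total_recursive 2 (\<lambda>xs. compl_jump_name (code_nth (xs ! 0)) (xs ! 1))"
    unfolding compl_jump_name_def Let_def cpair_eq_prod_encode
    by (intro total_recursive_intros total_recursive_minus1_stage; simp)
  show "total_recursive 1 (\<lambda>xs. cpair (snd (prod_decode (xs ! 0))) (snd (prod_decode (xs ! 0))))"
    unfolding cpair_eq_prod_encode by (intro total_recursive_intros; simp)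
  fix p p' :: baire and N
  assume eq: "\<And>k. k \<le> cpair (snd (prod_decode N)) (snd (prod_decode N)) \<Longrightarrow> p k = p' k"
  show "compl_jump_name p N = compl_jump_name p' N"
    unfolding compl_jump_name_def Let_def by (auto intro!: minus1_stage_cong eq cpair_mono)
qed

lemma compl_jump_name_nonzero: "compl_jump_name p N \<noteq> 0"
  by (simp add: compl_jump_name_def Let_def)

lemma baire_lim_rel_minus1_compl_jump_name:
  assumes lim: "baire_lim_rel p q" and inf: "infinite {n. q n \<noteq> 0}"
  shows "baire_lim_rel (minus1 (compl_jump_name p)) (minus1 q)"
  unfolding baire_lim_rel_def
proof
  fix j
  let ?e = "enumerate {n. q n \<noteq> 0} j"
  obtain M where M: "\<And>n s. M n \<le> s \<Longrightarrow> p (cpair s n) = q n"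
    using lim unfolding baire_lim_rel_def by metis
  have "minus1 (compl_jump_name p) (cpair i j) = minus1 q j" if i: "?e + (\<Sum>n\<le>?e. M n) \<le> i" for i
  proof -
    let ?p = "\<lambda>n. p (cpair i n)"
    have "nonzero_prefix ?p (Suc ?e) = nonzero_prefix q (Suc ?e)"
    proof (rule nonzero_prefix_cong)
      fix n assume "n < Suc ?e"
      then have "M n \<le> (\<Sum>n\<le>?e. M n)" by (intro member_le_sum) auto
      then show "?p n = q n" using i by (intro M) simp
    qed
    then have "j < length (nonzero_prefix ?p (Suc ?e))" "minus1_stage ?p (Suc ?e) j = minus1 q j"
      using minus1_stage_enumerate[OF inf, of j "Suc ?e"] by (simp_all add: minus1_stage_def)
    then have "minus1_stage ?p (Suc i) j = minus1 q j"
      using minus1_stage_mono(2)[of j ?p "Suc ?e" "Suc i"] i by simp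
    then show ?thesis
      by (simp add: minus1_all_nonzero[OF compl_jump_name_nonzero] compl_jump_name_cpair)
  qed
  then show "\<exists>N. \<forall>i\<ge>N. minus1 (compl_jump_name p) (cpair i j) = minus1 q j" by blast
qed

lemma compl_jump_name_correct:
  assumes "jump_rep (compl_rep d) p = Some (Some x)"
  shows "compl_rep (jump_rep d) (compl_jump_name p) = Some (Some x)"
proof -
  obtain q where lim: "baire_lim_rel p q" using assms unfolding jump_rep_def by (auto split: if_splits)
  then have "compl_rep d q = Some (Some x)" using assms by (simp add: jump_rep_eq)
  then have inf: "infinite {n. q n \<noteq> 0}" and x: "d (minus1 q) = Some x"
    by (simp_all add: compl_rep_eq_Some_Some)
  have "infinite {n. compl_jump_name p n \<noteq> 0}" by (simp add: compl_jump_name_nonzero)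
  then show ?thesis
    using x by (simp add: compl_rep_eq_Some_Some jump_rep_eq[OF baire_lim_rel_minus1_compl_jump_name[OF lim inf]])
qed

section \<open>From the completion of the jump to the jump of the completion\<close>

text \<open>At stage \<open>s\<close>, entry \<open>n = \<langle>i, j\<rangle>\<close> is the value of \<open>(p - 1) n\<close> (shifted by one) if it is
  already known and no known entry \<open>\<langle>u, j\<rangle>\<close> with \<open>i \<le> u \<le> s\<close> differs from it.  In the limit
  \<open>\<langle>i, j\<rangle>\<close> is therefore nonzero exactly when the approximations to the \<open>j\<close>-th limit entry are
  constant from \<open>i\<close> on, and then it carries that limit value.\<close>

definition jump_compl_name :: "baire \<Rightarrow> baire" where
  "jump_compl_name p N =
     (let s = snd (prod_decode N); n = fst (prod_decode N); i = snd (prod_decode n); j = fst (prod_decode n) in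
      if n < length (nonzero_prefix p (Suc s)) \<and>
         (\<forall>u<Suc s. i \<le> u \<and> cpair u j < length (nonzero_prefix p (Suc s)) \<longrightarrow>
                    minus1_stage p (Suc s) (cpair u j) = minus1_stage p (Suc s) n)
      then Suc (minus1_stage p (Suc s) n) else 0)"

lemma jump_compl_name_cpair:
  "jump_compl_name p (cpair s (cpair i j)) =
     (if cpair i j < length (nonzero_prefix p (Suc s)) \<and>
         (\<forall>u<Suc s. i \<le> u \<and> cpair u j < length (nonzero_prefix p (Suc s)) \<longrightarrow>
                    minus1_stage p (Suc s) (cpair u j) = minus1_stage p (Suc s) (cpair i j))
      then Suc (minus1_stage p (Suc s) (cpair i j)) else 0)"
  unfolding jump_compl_name_def Let_def prod_decode_cpair fst_conv snd_conv ..

lemma computable_jump_compl_name: "computable_map (\<lambda>p. Some (jump_compl_name p))"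
proof (rule computable_map_by_modulus[where B="\<lambda>N. snd (prod_decode N)"])
  show "total_recursive 2 (\<lambda>xs. jump_compl_name (code_nth (xs ! 0)) (xs ! 1))"
    unfolding jump_compl_name_def Let_def cpair_eq_prod_encode
    by (intro total_recursive_intros total_recursive_minus1_stage total_recursive_nonzero_prefix_length
          recursive_pred_all_less; simp)
  show "total_recursive 1 (\<lambda>xs. snd (prod_decode (xs ! 0)))"
    by (intro total_recursive_intros; simp)
  fix p p' :: baire and N
  assume eq: "\<And>k. k \<le> snd (prod_decode N) \<Longrightarrow> p k = p' k"
  have "nonzero_prefix p (Suc (snd (prod_decode N))) = nonzero_prefix p' (Suc (snd (prod_decode N)))"
    "\<And>m. minus1_stage p (Suc (snd (prod_decode N))) m = minus1_stage p' (Suc (snd (prod_decode N))) m"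
    by (auto intro!: nonzero_prefix_cong minus1_stage_cong eq)
  then show "jump_compl_name p N = jump_compl_name p' N"
    unfolding jump_compl_name_def Let_def by simp
qed

lemma jump_compl_name_converges: "\<exists>v N. \<forall>s\<ge>N. jump_compl_name p (cpair s (cpair i j)) = v"
proof (cases "\<exists>t0. cpair i j < length (nonzero_prefix p t0)")
  case False
  then show ?thesis by (intro exI[of _ 0]) (auto simp: jump_compl_name_cpair)
next
  case True
  then obtain t0 where t0: "cpair i j < length (nonzero_prefix p t0)" by blast
  define v where "v = minus1_stage p t0 (cpair i j)"
  have known: "cpair i j < length (nonzero_prefix p (Suc s))" "minus1_stage p (Suc s) (cpair i j) = v"
    if "t0 \<le> s" for s
    using minus1_stage_mono[OF t0, of "Suc s"] that unfolding v_def by simp_all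
  show ?thesis
  proof (cases "\<exists>u t1. i \<le> u \<and> cpair u j < length (nonzero_prefix p t1) \<and>
                         minus1_stage p t1 (cpair u j) \<noteq> v")
    case True
    then obtain u t1 where u: "i \<le> u" "cpair u j < length (nonzero_prefix p t1)"
      "minus1_stage p t1 (cpair u j) \<noteq> v" by blast
    have "jump_compl_name p (cpair s (cpair i j)) = 0" if s: "t0 + t1 + u \<le> s" for s
    proof -
      have "u < Suc s" "cpair u j < length (nonzero_prefix p (Suc s))"
        and "minus1_stage p (Suc s) (cpair u j) \<noteq> minus1_stage p (Suc s) (cpair i j)"
        using minus1_stage_mono[OF u(2), of "Suc s"] known(2)[of s] u(3) s by simp_all
      then show ?thesis unfolding jump_compl_name_cpair using u(1) by (intro if_not_P) blast
    qed
    then show ?thesis by blast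
  next
    case False
    then have "jump_compl_name p (cpair s (cpair i j)) = Suc v" if "t0 \<le> s" for s
      using known[OF that] by (auto simp: jump_compl_name_cpair)
    then show ?thesis by blast
  qed
qed

lemma baire_lim_rel_jump_compl_name: "\<exists>q. baire_lim_rel (jump_compl_name p) q"
proof -
  have "\<exists>v N. \<forall>s\<ge>N. jump_compl_name p (cpair s n) = v" for n
    using jump_compl_name_converges[of p "snd (prod_decode n)" "fst (prod_decode n)"]
    unfolding cpair_prod_decode .
  then obtain q where "\<forall>n. \<exists>N. \<forall>s\<ge>N. jump_compl_name p (cpair s n) = q n" by metis
  then show ?thesis unfolding baire_lim_rel_def by blast
qed

lemma jump_compl_name_defined: "jump_rep (compl_rep d) (jump_compl_name p) \<noteq> None"
proof -
  obtain q where "baire_lim_rel (jump_compl_name p) q" using baire_lim_rel_jump_compl_name by blast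
  then show ?thesis by (simp add: jump_rep_eq compl_rep_defined)
qed

lemma jump_compl_name_eventually:
  assumes inf: "infinite {n. p n \<noteq> 0}"
  shows "\<exists>N. \<forall>s\<ge>N. jump_compl_name p (cpair s (cpair i j)) =
           (if \<forall>u\<ge>i. minus1 p (cpair u j) = minus1 p (cpair i j) then Suc (minus1 p (cpair i j)) else 0)"
proof -
  let ?e = "enumerate {n. p n \<noteq> 0}"
  have known: "m < length (nonzero_prefix p (Suc s))" "minus1_stage p (Suc s) m = minus1 p m"
    if "?e m \<le> s" for m s
    using minus1_stage_enumerate[OF inf, of m "Suc s"] that by simp_all
  show ?thesis
  proof (cases "\<forall>u\<ge>i. minus1 p (cpair u j) = minus1 p (cpair i j)")
    case True
    have "jump_compl_name p (cpair s (cpair i j)) = Suc (minus1 p (cpair i j))" if s: "?e (cpair i j) \<le> s" for s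
    proof -
      have "\<forall>u<Suc s. i \<le> u \<and> cpair u j < length (nonzero_prefix p (Suc s)) \<longrightarrow>
              minus1_stage p (Suc s) (cpair u j) = minus1_stage p (Suc s) (cpair i j)"
      proof (intro allI impI)
        fix u assume u: "i \<le> u \<and> cpair u j < length (nonzero_prefix p (Suc s))"
        then have "minus1_stage p (Suc s) (cpair u j) = minus1 p (cpair u j)"
          by (intro minus1_stage_eq_minus1[OF inf]) simp
        also have "\<dots> = minus1 p (cpair i j)" using True u by blast
        also have "\<dots> = minus1_stage p (Suc s) (cpair i j)" using known(2)[OF s] by simp
        finally show "minus1_stage p (Suc s) (cpair u j) = minus1_stage p (Suc s) (cpair i j)" .
      qed
      then show ?thesis unfolding jump_compl_name_cpair using known[OF s] by simp
    qed
    then show ?thesis unfolding if_P[OF True] by blast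
  next
    case False
    then obtain u where u: "i \<le> u" "minus1 p (cpair u j) \<noteq> minus1 p (cpair i j)" by blast
    have "jump_compl_name p (cpair s (cpair i j)) = 0" if s: "?e (cpair i j) + ?e (cpair u j) + u \<le> s" for s
    proof -
      have "u < Suc s" "cpair u j < length (nonzero_prefix p (Suc s))"
        "minus1_stage p (Suc s) (cpair u j) \<noteq> minus1_stage p (Suc s) (cpair i j)"
        using known[of "cpair u j" s] known(2)[of "cpair i j" s] u(2) s by simp_all
      then show ?thesis unfolding jump_compl_name_cpair using u(1) by (intro if_not_P) blast
    qed
    then show ?thesis unfolding if_not_P[OF False] by blast
  qed
qed

lemma jump_compl_name_limit:
  assumes lim: "baire_lim_rel (jump_compl_name p) q" and inf: "infinite {n. p n \<noteq> 0}"
  shows "q (cpair i j) =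
           (if \<forall>u\<ge>i. minus1 p (cpair u j) = minus1 p (cpair i j) then Suc (minus1 p (cpair i j)) else 0)"
  using jump_compl_name_eventually[OF inf] baire_lim_rel_eq[OF lim] by blast

lemma jump_compl_name_limit_values:
  assumes q: "baire_lim_rel (jump_compl_name p) q" and inf: "infinite {n. p n \<noteq> 0}"
    and L: "baire_lim_rel (minus1 p) L"
  shows "q n \<noteq> 0 \<Longrightarrow> q n = Suc (L (fst (prod_decode n)))"
    and "\<exists>N. \<forall>i\<ge>N. q (cpair i j) = Suc (L j)"
proof -
  note q_values = jump_compl_name_limit[OF q inf]
  have L_eventually: "\<exists>N. \<forall>u\<ge>N. minus1 p (cpair u j) = L j" for j
    using L unfolding baire_lim_rel_def by blast
  show "q n = Suc (L (fst (prod_decode n)))" if "q n \<noteq> 0"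
  proof -
    define i j where "i = snd (prod_decode n)" and "j = fst (prod_decode n)"
    have n: "n = cpair i j" unfolding i_def j_def by (rule cpair_prod_decode[symmetric])
    have stable: "\<forall>u\<ge>i. minus1 p (cpair u j) = minus1 p (cpair i j)"
    proof (rule ccontr)
      assume "\<not> ?thesis"
      then have "q (cpair i j) = 0" unfolding q_values[of i j] by (rule if_not_P)
      then show False using that n by simp
    qed
    obtain N where N: "\<forall>u\<ge>N. minus1 p (cpair u j) = L j" using L_eventually by blast
    have "minus1 p (cpair i j) = L j"
      using stable[rule_format, of "max i N"] N[rule_format, of "max i N"] by simp
    then show ?thesis unfolding n q_values[of i j] if_P[OF stable] by (simp add: prod_decode_cpair)
  qed
  obtain N where N: "\<forall>u\<ge>N. minus1 p (cpair u j) = L j" using L_eventually by blast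
  have "q (cpair i j) = Suc (L j)" if "N \<le> i" for i
  proof -
    have "\<forall>u\<ge>i. minus1 p (cpair u j) = minus1 p (cpair i j)" using N that by simp
    then show ?thesis unfolding q_values[of i j] using N that by simp
  qed
  then show "\<exists>N. \<forall>i\<ge>N. q (cpair i j) = Suc (L j)" by blast
qed

lemma jump_compl_name_correct:
  assumes range_invariant: "\<And>p p'. range p = range p' \<Longrightarrow> d p = d p'"
    and x: "compl_rep (jump_rep d) p = Some (Some x)"
  shows "jump_rep (compl_rep d) (jump_compl_name p) = Some (Some x)"
proof -
  have inf: "infinite {n. p n \<noteq> 0}" and dx: "jump_rep d (minus1 p) = Some x"
    using x by (simp_all add: compl_rep_eq_Some_Some)
  then obtain L where L: "baire_lim_rel (minus1 p) L" unfolding jump_rep_def by (auto split: if_splits)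
  then have dL: "d L = Some x" using dx by (simp add: jump_rep_eq)
  obtain q where q: "baire_lim_rel (jump_compl_name p) q" using baire_lim_rel_jump_compl_name by blast
  note q_range = range_minus1_eq_range[OF jump_compl_name_limit_values[OF q inf L]]
  have "d (minus1 q) = d L" using q_range(2) by (rule range_invariant)
  then have "compl_rep d q = Some (Some x)" using q_range(1) dL by (simp add: compl_rep_eq_Some_Some)
  then show ?thesis by (simp add: jump_rep_eq[OF q])
qed

theorem proposition5p4:
  fixes \<alpha> :: "nat \<Rightarrow> 'a::metric_space"
  assumes "computable_metric \<alpha>"
  shows "sW_equiv (compl_rep (jump_rep (closed_rep \<alpha>))) (compl_rep (cauchy_rep \<alpha>)) (compl_prob choice_prob)
                  (jump_rep (compl_rep (closed_rep \<alpha>))) (compl_rep (cauchy_rep \<alpha>)) (compl_prob choice_prob)"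
  unfolding sW_equiv_def
proof
  show "sW_le (compl_rep (jump_rep (closed_rep \<alpha>))) (compl_rep (cauchy_rep \<alpha>)) (compl_prob choice_prob)
              (jump_rep (compl_rep (closed_rep \<alpha>))) (compl_rep (cauchy_rep \<alpha>)) (compl_prob choice_prob)"
  proof (rule sW_le_compl_prob_by_name_translation[where K=jump_compl_name])
    show "computable_map (\<lambda>p. Some (jump_compl_name p))" by (rule computable_jump_compl_name)
    show "jump_rep (compl_rep (closed_rep \<alpha>)) (jump_compl_name p) \<noteq> None" for p
      by (rule jump_compl_name_defined)
    show "jump_rep (compl_rep (closed_rep \<alpha>)) (jump_compl_name p) = Some (Some x)"
      if "compl_rep (jump_rep (closed_rep \<alpha>)) p = Some (Some x)" for p x
      using closed_rep_range_invariant that by (rule jump_compl_name_correct)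
  qed
  show "sW_le (jump_rep (compl_rep (closed_rep \<alpha>))) (compl_rep (cauchy_rep \<alpha>)) (compl_prob choice_prob)
              (compl_rep (jump_rep (closed_rep \<alpha>))) (compl_rep (cauchy_rep \<alpha>)) (compl_prob choice_prob)"
  proof (rule sW_le_compl_prob_by_name_translation[where K=compl_jump_name])
    show "computable_map (\<lambda>p. Some (compl_jump_name p))" by (rule computable_compl_jump_name)
    show "compl_rep (jump_rep (closed_rep \<alpha>)) (compl_jump_name p) \<noteq> None" for p
      by (rule compl_rep_defined)
    show "compl_rep (jump_rep (closed_rep \<alpha>)) (compl_jump_name p) = Some (Some x)"
      if "jump_rep (compl_rep (closed_rep \<alpha>)) p = Some (Some x)" for p x
      using that by (rule compl_jump_name_correct)
  qed
qed

end
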